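(* Let $R$ be a commutative ring with identity and $n$ a positive integer. If $R[X]_A$ satisfies the ascending chain condition on $n$-generated ideals, then so does $R$.
   Context: $X$ is an indeterminate over $R$, $A=\{f\in R[X]\mid f(0)=1\}$, and $R[X]_A$ is the localization of $R[X]$ at $A$. An ideal is $n$-generated if it is generated by $n$ elements; a ring satisfies the $n$-ascending chain condition if every ascending chain of $n$-generated ideals stabilizes. *)

theory Defs
  imports "HOL-Computational_Algebra.Polynomial"
begin

definition n_generated_ideal :: "nat \<Rightarrow> 'a::comm_ring_1 set \<Rightarrow> bool" where
  "n_generated_ideal n I \<longleftrightarrow> (\<exists>g::nat \<Rightarrow> 'a. I = {\<Sum>i<n. r i * g i | r. True})"

definition n_acc :: "nat \<Rightarrow> 'a::comm_ring_1 itself \<Rightarrow> bool" where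
  "n_acc n _ \<longleftrightarrow>
     (\<forall>I :: nat \<Rightarrow> 'a set. (\<forall>k. n_generated_ideal n (I k)) \<and> (\<forall>k. I k \<subseteq> I (Suc k))
        \<longrightarrow> (\<exists>N. \<forall>m\<ge>N. I m = I N))"

definition locA :: "'a::comm_ring_1 poly set" where
  "locA = {f. poly f 0 = 1}"

lemma locA_mult: "s \<in> locA \<Longrightarrow> t \<in> locA \<Longrightarrow> s * t \<in> locA"
  by (simp add: locA_def)

lemma locA_1: "1 \<in> locA"
  by (simp add: locA_def)

definition locrel :: "'a::comm_ring_1 poly \<times> 'a poly \<Rightarrow> 'a poly \<times> 'a poly \<Rightarrow> bool" where
  "locrel x y \<longleftrightarrow> snd x \<in> locA \<and> snd y \<in> locA \<and>
     (\<exists>u\<in>locA. u * (fst x * snd y - fst y * snd x) = 0)"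

lemma locrel_refl: "s \<in> locA \<Longrightarrow> locrel (f, s) (f, s)"
  unfolding locrel_def using locA_1 by auto

lemma locrel_sym: "locrel x y \<Longrightarrow> locrel y x"
  unfolding locrel_def
proof (elim conjE bexE, intro conjI)
  fix u assume "u \<in> locA" "u * (fst x * snd y - fst y * snd x) = 0"
  then show "\<exists>u\<in>locA. u * (fst y * snd x - fst x * snd y) = 0"
    by (intro bexI[of _ u]) (auto simp: algebra_simps)
qed

lemma locrel_trans:
  assumes "locrel x y" "locrel y z" shows "locrel x z"
proof -
  obtain f s g t h r where xyz: "x = (f, s)" "y = (g, t)" "z = (h, r)"
    by (metis prod.collapse)
  from assms obtain u v where u: "u \<in> locA" "u * (f * t - g * s) = 0"
    and v: "v \<in> locA" "v * (g * r - h * t) = 0" and st: "s \<in> locA" "t \<in> locA" "r \<in> locA"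
    by (auto simp: locrel_def xyz)
  have "u * v * t * (f * r - h * s) = v * r * (u * (f * t - g * s)) + u * s * (v * (g * r - h * t))"
    by (simp add: algebra_simps)
  also have "\<dots> = 0" using u v by simp
  finally show ?thesis
    using st u v by (auto simp: locrel_def xyz intro!: bexI[of _ "u * v * t"] locA_mult)
qed

lemma part_equivp_locrel: "part_equivp locrel"
proof (rule part_equivpI)
  show "\<exists>x. locrel x x" using locrel_refl[OF locA_1] by blast
  show "symp locrel" by (auto intro: sympI locrel_sym)
  show "transp locrel" by (auto intro: transpI locrel_trans)
qed

quotient_type (overloaded) 'a loc = "'a::comm_ring_1 poly \<times> 'a poly" / partial: locrel
  by (rule part_equivp_locrel)

text \<open>Elements of 'a loc are the fractions f / s with f in R[X] and s in A, i.e. R[X]_A.\<close>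

lemma locrel_pairI:
  assumes "s \<in> locA" "t \<in> locA" "u \<in> locA" "u * (f * t - g * s) = 0"
  shows "locrel (f, s) (g, t)"
  using assms unfolding locrel_def by auto

lemma locrel_pairE:
  assumes "locrel (f, s) (g, t)"
  obtains u where "s \<in> locA" "t \<in> locA" "u \<in> locA" "u * (f * t - g * s) = 0"
  using assms unfolding locrel_def by auto

lemma plus_resp:
  assumes "locrel (f, s) (f', s')" "locrel (g, t) (g', t')"
  shows "locrel (f * t + g * s, s * t) (f' * t' + g' * s', s' * t')"
proof -
  from assms obtain u v where u: "u \<in> locA" "u * (f * s' - f' * s) = 0"
    and v: "v \<in> locA" "v * (g * t' - g' * t) = 0"
    and m: "s \<in> locA" "s' \<in> locA" "t \<in> locA" "t' \<in> locA"
    by (metis locrel_pairE)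
  have "u * v * ((f * t + g * s) * (s' * t') - (f' * t' + g' * s') * (s * t))
        = v * t * t' * (u * (f * s' - f' * s)) + u * s * s' * (v * (g * t' - g' * t))"
    by (simp add: algebra_simps)
  also have "\<dots> = 0" using u v by simp
  finally show ?thesis
    using u v m by (intro locrel_pairI locA_mult) (auto intro: locA_mult)
qed

lemma times_resp:
  assumes "locrel (f, s) (f', s')" "locrel (g, t) (g', t')"
  shows "locrel (f * g, s * t) (f' * g', s' * t')"
proof -
  from assms obtain u v where u: "u \<in> locA" "u * (f * s' - f' * s) = 0"
    and v: "v \<in> locA" "v * (g * t' - g' * t) = 0"
    and m: "s \<in> locA" "s' \<in> locA" "t \<in> locA" "t' \<in> locA"
    by (metis locrel_pairE)
  have "u * v * ((f * g) * (s' * t') - (f' * g') * (s * t))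
        = v * g * t' * (u * (f * s' - f' * s)) + u * f' * s * (v * (g * t' - g' * t))"
    by (simp add: algebra_simps)
  also have "\<dots> = 0" using u v by simp
  finally show ?thesis
    using u v m by (intro locrel_pairI locA_mult) (auto intro: locA_mult)
qed

lemma uminus_resp:
  assumes "locrel (f, s) (f', s')"
  shows "locrel (- f, s) (- f', s')"
proof -
  from assms obtain u where u: "u \<in> locA" "u * (f * s' - f' * s) = 0"
    and m: "s \<in> locA" "s' \<in> locA" by (metis locrel_pairE)
  have "u * (- f * s' - - f' * s) = - (u * (f * s' - f' * s))" by (simp add: algebra_simps)
  then show ?thesis using u m by (intro locrel_pairI) auto
qed

lemma locrel_eqI:
  assumes "s \<in> locA" "t \<in> locA" "f * t = g * s"
  shows "locrel (f, s) (g, t)"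
  using assms by (intro locrel_pairI[where u=1]) (auto simp: locA_1)

instantiation loc :: (comm_ring_1) comm_ring_1
begin

lift_definition zero_loc :: "'a loc" is "(0, 1)"
  by (rule locrel_refl[OF locA_1])

lift_definition one_loc :: "'a loc" is "(1, 1)"
  by (rule locrel_refl[OF locA_1])

lift_definition plus_loc :: "'a loc \<Rightarrow> 'a loc \<Rightarrow> 'a loc"
  is "\<lambda>(f, s) (g, t). (f * t + g * s, s * t)"
  by (clarsimp, rule plus_resp)

lift_definition times_loc :: "'a loc \<Rightarrow> 'a loc \<Rightarrow> 'a loc"
  is "\<lambda>(f, s) (g, t). (f * g, s * t)"
  by (clarsimp, rule times_resp)

lift_definition uminus_loc :: "'a loc \<Rightarrow> 'a loc"
  is "\<lambda>(f, s). (- f, s)"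
  by (clarsimp, rule uminus_resp)

definition minus_loc :: "'a loc \<Rightarrow> 'a loc \<Rightarrow> 'a loc" where
  "minus_loc x y = x + - y"

instance
proof
  fix a b c :: "'a loc"
  show "a * b * c = a * (b * c)"
    by transfer (auto intro!: locrel_eqI locA_mult simp: locrel_def algebra_simps)
  show "a * b = b * a"
    by transfer (auto intro!: locrel_eqI locA_mult simp: locrel_def algebra_simps)
  show "1 * a = a"
    by transfer (auto intro!: locrel_eqI locA_mult simp: locrel_def algebra_simps)
  show "(a + b) * c = a * c + b * c"
    by transfer (auto intro!: locrel_eqI locA_mult simp: locrel_def algebra_simps)
  show "a + b + c = a + (b + c)"
    by transfer (auto intro!: locrel_eqI locA_mult simp: locrel_def algebra_simps)
  show "a + b = b + a"
    by transfer (auto intro!: locrel_eqI locA_mult simp: locrel_def algebra_simps)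
  show "0 + a = a"
    by transfer (auto intro!: locrel_eqI locA_mult simp: locrel_def algebra_simps)
  show "- a + a = 0"
    by transfer (auto intro!: locrel_eqI locA_mult locA_1 simp: locrel_def algebra_simps)
  show "a - b = a + - b"
    by (simp add: minus_loc_def)
  show "(0::'a loc) \<noteq> 1"
    by transfer (auto simp: locrel_def locA_def)
qed

end

end

theory Submission
  imports Defs
begin

text \<open>Evaluation at 0 is a ring homomorphism R[X]_A \<rightarrow> R (every denominator takes the value 1
  at 0) and a left inverse of the constant embedding R \<rightarrow> R[X]_A. For such a retract, every ideal
  of R is the contraction of its extension to R[X]_A, and extending preserves the number of
  generators. So a chain of n-generated ideals of R extends to a chain of n-generated ideals of
  R[X]_A, whose stabilisation forces that of the original chain.\<close>

definition ideal_gen :: "nat \<Rightarrow> (nat \<Rightarrow> 'a::comm_ring_1) \<Rightarrow> 'a set" where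
  "ideal_gen n g = {\<Sum>i<n. r i * g i | r. True}"

lemma n_generated_ideal_iff: "n_generated_ideal n I \<longleftrightarrow> (\<exists>g. I = ideal_gen n g)"
  by (simp add: n_generated_ideal_def ideal_gen_def)

lemma ideal_genI: "x = (\<Sum>i<n. r i * g i) \<Longrightarrow> x \<in> ideal_gen n g"
  unfolding ideal_gen_def by blast

lemma ideal_genE:
  assumes "x \<in> ideal_gen n g"
  obtains r where "x = (\<Sum>i<n. r i * g i)"
  using assms unfolding ideal_gen_def by blast

lemma generator_in_ideal_gen:
  assumes "j < n"
  shows "g j \<in> ideal_gen n g"
proof (rule ideal_genI)
  have "(\<Sum>i<n. (if i = j then 1 else 0) * g i) = (\<Sum>i<n. if i = j then g i else 0)"
    by (rule sum.cong) auto
  with assms show "g j = (\<Sum>i<n. (if i = j then 1 else 0) * g i)"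
    by simp
qed

lemma ideal_gen_subset:
  assumes "\<And>i. i < n \<Longrightarrow> g i \<in> ideal_gen n h"
  shows "ideal_gen n g \<subseteq> ideal_gen n h"
proof
  fix x assume "x \<in> ideal_gen n g"
  then obtain r where x: "x = (\<Sum>i<n. r i * g i)" by (rule ideal_genE)
  have "\<forall>i. \<exists>c. i < n \<longrightarrow> g i = (\<Sum>j<n. c j * h j)"
    using assms unfolding ideal_gen_def by blast
  then obtain c where c: "\<And>i. i < n \<Longrightarrow> g i = (\<Sum>j<n. c i j * h j)" by metis
  have "x = (\<Sum>i<n. r i * (\<Sum>j<n. c i j * h j))" unfolding x using c by simp
  also have "\<dots> = (\<Sum>j<n. \<Sum>i<n. r i * c i j * h j)"
    by (subst sum.swap) (simp add: sum_distrib_left mult.assoc)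
  also have "\<dots> = (\<Sum>j<n. (\<Sum>i<n. r i * c i j) * h j)"
    by (simp add: sum_distrib_right)
  finally show "x \<in> ideal_gen n h" by (rule ideal_genI)
qed

lemma image_ideal_gen:
  fixes f :: "'a::comm_ring_1 \<Rightarrow> 'b::comm_ring_1"
  assumes add: "\<And>x y. f (x + y) = f x + f y" and mult: "\<And>x y. f (x * y) = f x * f y"
    and "x \<in> ideal_gen n g"
  shows "f x \<in> ideal_gen n (f \<circ> g)"
proof -
  obtain r where x: "x = (\<Sum>i<n. r i * g i)" using assms(3) by (rule ideal_genE)
  have "f 0 = 0" using add[of 0 0] by simp
  then have "f x = (\<Sum>i<n. f (r i) * (f \<circ> g) i)"
    unfolding x by (simp add: sum_comp_morphism[symmetric, of f] add mult)
  then show ?thesis by (rule ideal_genI)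
qed

lemma n_acc_retract:
  fixes f :: "'a::comm_ring_1 \<Rightarrow> 'b::comm_ring_1" and g :: "'b \<Rightarrow> 'a"
  assumes f_add: "\<And>x y. f (x + y) = f x + f y" and f_mult: "\<And>x y. f (x * y) = f x * f y"
    and g_add: "\<And>x y. g (x + y) = g x + g y" and g_mult: "\<And>x y. g (x * y) = g x * g y"
    and retract: "\<And>x. g (f x) = x"
    and acc: "n_acc n TYPE('b)"
  shows "n_acc n TYPE('a)"
  unfolding n_acc_def
proof (intro allI impI, elim conjE)
  fix I :: "nat \<Rightarrow> 'a set"
  assume gen: "\<forall>k. n_generated_ideal n (I k)" and chain: "\<forall>k. I k \<subseteq> I (Suc k)"
  obtain G where G: "\<And>k. I k = ideal_gen n (G k)"
    using gen unfolding n_generated_ideal_iff by metis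
  define J where "J k = ideal_gen n (f \<circ> G k)" for k
  have contraction: "I k = f -` J k" for k
  proof
    show "I k \<subseteq> f -` J k"
      unfolding G J_def using image_ideal_gen[OF f_add f_mult] by blast
    show "f -` J k \<subseteq> I k"
    proof
      fix x assume "x \<in> f -` J k"
      then have "g (f x) \<in> ideal_gen n (g \<circ> (f \<circ> G k))"
        unfolding J_def by (intro image_ideal_gen[OF g_add g_mult]) simp
      then show "x \<in> I k" by (simp add: G retract comp_def)
    qed
  qed
  have "J k \<subseteq> J (Suc k)" for k
    unfolding J_def
  proof (rule ideal_gen_subset)
    fix i assume "i < n"
    then have "G k i \<in> I (Suc k)"
      using generator_in_ideal_gen chain G by blast
    then show "(f \<circ> G k) i \<in> ideal_gen n (f \<circ> G (Suc k))"
      using contraction J_def by auto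
  qed
  moreover have "n_generated_ideal n (J k)" for k
    unfolding n_generated_ideal_iff J_def by blast
  ultimately obtain N where "\<forall>m\<ge>N. J m = J N"
    using acc unfolding n_acc_def by blast
  then have "\<forall>m\<ge>N. I m = I N"
    using contraction by metis
  then show "\<exists>N. \<forall>m\<ge>N. I m = I N" ..
qed

lift_definition loc_const :: "'a::comm_ring_1 \<Rightarrow> 'a loc" is "\<lambda>a. ([:a:], 1)"
  by (rule locrel_refl[OF locA_1])

lift_definition loc_eval_0 :: "'a::comm_ring_1 loc \<Rightarrow> 'a" is "\<lambda>(f, s). poly f 0"
proof (clarify elim!: locrel_pairE)
  fix f s g t u :: "'a poly"
  assume denominators: "s \<in> locA" "t \<in> locA" "u \<in> locA"
    and "u * (f * t - g * s) = 0"
  from denominators have "poly f 0 - poly g 0 = poly (u * (f * t - g * s)) 0"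
    by (simp add: locA_def)
  also have "\<dots> = 0"
    using \<open>u * (f * t - g * s) = 0\<close> by simp
  finally show "poly f 0 = poly g 0"
    by simp
qed

lemma loc_const_add: "loc_const (a + b) = loc_const a + loc_const b"
  by transfer (auto intro!: locrel_eqI simp: locA_1)

lemma loc_const_mult: "loc_const (a * b) = loc_const a * loc_const b"
  by transfer (auto intro!: locrel_eqI simp: locA_1)

lemma loc_eval_0_add: "loc_eval_0 (x + y) = loc_eval_0 x + loc_eval_0 y"
  by transfer (auto simp: locrel_def locA_def)

lemma loc_eval_0_mult: "loc_eval_0 (x * y) = loc_eval_0 x * loc_eval_0 y"
  by transfer (auto simp: locrel_def locA_def)

lemma loc_eval_0_loc_const: "loc_eval_0 (loc_const a) = a"
  by transfer simp

theorem mainTheorem4: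
  fixes n :: nat
  assumes "n > 0"
    and "n_acc n TYPE('a::comm_ring_1 loc)"
  shows "n_acc n TYPE('a)"
  using loc_const_add loc_const_mult loc_eval_0_add loc_eval_0_mult loc_eval_0_loc_const assms(2)
  by (rule n_acc_retract)

end
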